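(* Let $k \geq 3$ be an integer. For integers $n \geq 1$ let $P(n;k) = \frac{(k-2)n^2 + (4-k)n}{2}$ be the $n$-th $k$-gonal number, and for integers $m \geq 0$ let $C(m;k) = \frac{km^2 - km + 2}{2}$ be the $m$-th centered $k$-gonal number. Then the numbers that are both $k$-gonal and centered $k$-gonal (i.e. the integers $N$ such that $N = P(n;k)$ for some integer $n \geq 1$ and $N = C(m;k)$ for some integer $m \geq 0$) are exactly the numbers $$\frac{k}{16(k - 2)}\left\{\frac{-2k^2 + 18k - 32}{k} + \left[k - 1 + \sqrt{k(k - 2)}\right]^{2i + 1} + \left[k - 1 - \sqrt{k(k - 2)}\right]^{2i + 1}\right\}, \qquad i \geq 0 .$$
   Context: $P(n;k)$ denotes the $n$-th $k$-gonal (polygonal) number and $C(m;k)$ the $m$-th centered $k$-gonal number, with the explicit formulas given in the claim. *)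

theory Defs
  imports Complex_Main
begin

definition polygonal :: "int \<Rightarrow> int \<Rightarrow> real" where
  "polygonal n k = (real_of_int (k - 2) * (real_of_int n)^2 + real_of_int (4 - k) * real_of_int n) / 2"

definition centered_polygonal :: "int \<Rightarrow> int \<Rightarrow> real" where
  "centered_polygonal m k = (real_of_int k * (real_of_int m)^2 - real_of_int k * real_of_int m + 2) / 2"

end

theory Submission
  imports Defs
begin

text \<open>With \<open>a = 2(k-2)n + 4 - k\<close> and \<open>b = 2m - 1\<close>, completing the square turns
  \<open>P(n;k) = C(m;k)\<close> into the Pell-type equation \<open>a\<^sup>2 - k(k-2) b\<^sup>2 = 2k\<close>, and
  \<open>P(n;k) = (a\<^sup>2 - (k-4)\<^sup>2) / (8(k-2))\<close>. Since \<open>(k-1)\<^sup>2 - k(k-2) = 1\<close>, the unit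
  \<open>k - 1 + \<surd>(k(k-2))\<close> acts on the solutions, and a descent (multiplication by its
  conjugate decreases \<open>b\<close>) shows that the positive solutions with odd \<open>b\<close> are exactly
  \<open>a + b\<surd>(k(k-2)) = (k + \<surd>(k(k-2))) (k - 1 + \<surd>(k(k-2)))\<^sup>i\<close>. Each of them comes from
  some \<open>n \<ge> 1\<close>, \<open>m \<ge> 1\<close>, and squaring \<open>a\<close> gives the closed form of the theorem.\<close>

lemma polygonal_eq_square:
  assumes "k \<noteq> 2"
  shows "polygonal n k
    = (real_of_int (2*(k-2)*n + 4 - k) ^ 2 - (real_of_int k - 4)^2) / (8 * (real_of_int k - 2))"
  using assms by (simp add: polygonal_def field_simps power2_eq_square)

lemma polygonal_eq_centered_polygonal_iff:
  assumes "k \<noteq> 2"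
  shows "polygonal n k = centered_polygonal m k
    \<longleftrightarrow> (2*(k-2)*n + 4 - k)^2 - k*(k-2)*(2*m - 1)^2 = 2*k"
proof -
  have "2 * polygonal n k = real_of_int ((k-2)*n^2 + (4-k)*n)"
    and "2 * centered_polygonal m k = real_of_int (k*m^2 - k*m + 2)"
    by (simp_all add: polygonal_def centered_polygonal_def)
  then have "polygonal n k = centered_polygonal m k
      \<longleftrightarrow> (k-2)*n^2 + (4-k)*n = k*m^2 - k*m + 2"
    by (metis mult_cancel_left of_int_eq_iff zero_neq_numeral)
  moreover have "(2*(k-2)*n + 4 - k)^2 - k*(k-2)*(2*m - 1)^2 - 2*k
      = 4*(k-2) * (((k-2)*n^2 + (4-k)*n) - (k*m^2 - k*m + 2))"
    by (simp add: power2_eq_square algebra_simps)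
  ultimately show ?thesis
    using assms by auto
qed

lemma polygonal_in_Ints: "polygonal n k \<in> \<int>"
proof -
  have "even (n * (n - 1))" by simp
  then obtain t where t: "n * (n - 1) = 2 * t" by (rule evenE)
  have "(k-2)*n^2 + (4-k)*n = 2 * ((k - 2) * t + n)"
    using t by (simp add: power2_eq_square algebra_simps)
  then have "polygonal n k = real_of_int ((k - 2) * t + n)"
    unfolding polygonal_def by (metis of_int_add of_int_diff of_int_mult of_int_numeral of_int_power
        nonzero_mult_div_cancel_left zero_neq_numeral)
  then show ?thesis by simp
qed

text \<open>\<open>pell_orbit k i = (a, b)\<close> encodes
  \<open>a + b\<surd>(k(k-2)) = (k + \<surd>(k(k-2))) (k - 1 + \<surd>(k(k-2)))\<^sup>i\<close>.\<close>

fun pell_orbit :: "int \<Rightarrow> nat \<Rightarrow> int \<times> int" where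
  "pell_orbit k 0 = (k, 1)"
| "pell_orbit k (Suc i) =
    (case pell_orbit k i of (a, b) \<Rightarrow> ((k-1)*a + k*(k-2)*b, a + (k-1)*b))"

lemma pell_orbit_pell:
  "fst (pell_orbit k i) ^ 2 - k*(k-2) * snd (pell_orbit k i) ^ 2 = 2*k"
proof (induction i)
  case 0
  then show ?case by (simp add: power2_eq_square algebra_simps)
next
  case (Suc i)
  obtain a b where ab: "pell_orbit k i = (a, b)" by fastforce
  with Suc have "a^2 - k*(k-2)*b^2 = 2*k" by simp
  then show ?case using ab by (simp add: power2_eq_square algebra_simps)
qed

lemma pell_orbit_shape:
  assumes "k \<ge> 3"
  shows "\<exists>n m. n \<ge> 1 \<and> m \<ge> 1 \<and> pell_orbit k i = (2*(k-2)*n + 4 - k, 2*m - 1)"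
proof (induction i)
  case 0
  show ?case by (rule exI[of _ 1], rule exI[of _ 1]) simp
next
  case (Suc i)
  then obtain n m where n: "n \<ge> 1" and m: "m \<ge> 1"
    and nm: "pell_orbit k i = (2*(k-2)*n + 4 - k, 2*m - 1)" by blast
  define n' where "n' = (k-1)*n + k*m - (k-2)"
  define m' where "m' = (k-2)*n + (k-1)*m + 3 - k"
  have "(k-1)*n \<ge> k-1" "k*m \<ge> k" "(k-2)*n \<ge> k-2" "(k-1)*m \<ge> k-1"
    using n m assms by (simp_all add: mult_left_mono[where a=1, simplified])
  then have "n' \<ge> 1" "m' \<ge> 1" using assms unfolding n'_def m'_def by linarith+
  moreover have "pell_orbit k (Suc i) = (2*(k-2)*n' + 4 - k, 2*m' - 1)"
    using nm unfolding n'_def m'_def by (simp add: algebra_simps)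
  ultimately show ?case by blast
qed

lemma pell_orbit_conj:
  fixes k :: int and s :: real
  defines "s \<equiv> sqrt (real_of_int (k * (k - 2)))"
  assumes "k \<ge> 2"
  shows "real_of_int (fst (pell_orbit k i)) + real_of_int (snd (pell_orbit k i)) * s
           = (real_of_int k + s) * (real_of_int k - 1 + s) ^ i
      \<and> real_of_int (fst (pell_orbit k i)) - real_of_int (snd (pell_orbit k i)) * s
           = (real_of_int k - s) * (real_of_int k - 1 - s) ^ i"
proof (induction i)
  case 0
  then show ?case by simp
next
  case (Suc i)
  obtain a b where ab: "pell_orbit k i = (a, b)" by fastforce
  have ss: "s * (s * x) = real_of_int k * (real_of_int k - 2) * x" for x
    unfolding s_def using assms(2) by (simp add: mult.assoc[symmetric])
  have "(real_of_int a + real_of_int b * s) * (real_of_int k - 1 + s)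
      = real_of_int ((k-1)*a + k*(k-2)*b) + real_of_int (a + (k-1)*b) * s"
   and "(real_of_int a - real_of_int b * s) * (real_of_int k - 1 - s)
      = real_of_int ((k-1)*a + k*(k-2)*b) - real_of_int (a + (k-1)*b) * s"
    by (simp_all add: algebra_simps ss)
  with Suc ab show ?case by (simp add: mult_ac)
qed

lemma pell_orbit_square:
  fixes k :: int and s :: real
  defines "s \<equiv> sqrt (real_of_int (k * (k - 2)))"
  assumes "k \<ge> 2"
  shows "2 * real_of_int (fst (pell_orbit k i)) ^ 2
    = real_of_int k * ((real_of_int k - 1 + s) ^ (2*i+1) + (real_of_int k - 1 - s) ^ (2*i+1))
      + 2 * real_of_int k"
proof -
  define K where "K = real_of_int k"
  define a where "a = real_of_int (fst (pell_orbit k i))"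
  define b where "b = real_of_int (snd (pell_orbit k i))"
  define u where "u = K - 1 + s"
  define v where "v = K - 1 - s"
  have ss: "s * s = K * (K - 2)"
    unfolding s_def K_def using assms(2) by simp
  have plus: "a + b * s = (K + s) * u ^ i" and minus: "a - b * s = (K - s) * v ^ i"
    using pell_orbit_conj[OF assms(2), of i]
    unfolding a_def b_def u_def v_def K_def s_def by auto
  have "(K + s)^2 = 2 * K * u" "(K - s)^2 = 2 * K * v" "(K + s) * (K - s) = 2 * K" "u * v = 1"
    unfolding u_def v_def using ss by (simp_all add: power2_eq_square algebra_simps)
  moreover have "4 * a^2 = (a + b * s)^2 + (a - b * s)^2 + 2 * ((a + b * s) * (a - b * s))"
    by (simp add: power2_eq_square algebra_simps)
  moreover have "(a + b * s) * (a - b * s) = ((K + s) * (K - s)) * (u * v) ^ i"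
    unfolding plus minus by (simp add: power_mult_distrib mult_ac)
  ultimately have "4 * a^2 = 2 * K * (u * (u ^ i)^2) + 2 * K * (v * (v ^ i)^2) + 4 * K"
    unfolding plus minus by (simp add: power_mult_distrib)
  moreover have "x * (x ^ i)^2 = x ^ (2*i+1)" for x :: real
    by (simp add: power_mult[symmetric] mult.commute)
  ultimately show ?thesis
    unfolding a_def K_def u_def v_def by (simp add: algebra_simps)
qed

lemma pell_orbit_closed_form:
  assumes "k \<ge> 3"
  shows "real_of_int k / (16 * real_of_int (k - 2)) *
              ((- 2 * (real_of_int k)^2 + 18 * real_of_int k - 32) / real_of_int k
               + (real_of_int k - 1 + sqrt (real_of_int (k * (k - 2)))) ^ (2 * i + 1)
               + (real_of_int k - 1 - sqrt (real_of_int (k * (k - 2)))) ^ (2 * i + 1))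
       = (real_of_int (fst (pell_orbit k i)) ^ 2 - (real_of_int k - 4)^2) / (8 * (real_of_int k - 2))"
proof -
  define S where "S = (real_of_int k - 1 + sqrt (real_of_int (k * (k - 2)))) ^ (2 * i + 1)
    + (real_of_int k - 1 - sqrt (real_of_int (k * (k - 2)))) ^ (2 * i + 1)"
  define a where "a = real_of_int (fst (pell_orbit k i))"
  have "real_of_int k * S = 2 * a^2 - 2 * real_of_int k"
    using pell_orbit_square[of k i] assms unfolding S_def a_def by simp
  then have numerator: "(- 2 * (real_of_int k)^2 + 18 * real_of_int k - 32) + real_of_int k * S
      = 2 * (a ^ 2 - (real_of_int k - 4)^2)"
    by (simp add: power2_eq_square algebra_simps)
  have k0: "real_of_int k \<noteq> 0" "real_of_int k - 2 \<noteq> 0"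
    using assms by auto
  have "real_of_int k / (16 * real_of_int (k - 2)) *
      ((- 2 * (real_of_int k)^2 + 18 * real_of_int k - 32) / real_of_int k + S)
    = ((- 2 * (real_of_int k)^2 + 18 * real_of_int k - 32) + real_of_int k * S)
      / (16 * (real_of_int k - 2))" (is "?closed = _")
    using k0 by (simp add: field_simps)
  also have "\<dots> = (a ^ 2 - (real_of_int k - 4)^2) / (8 * (real_of_int k - 2))"
    unfolding numerator using k0 by (simp add: field_simps)
  finally have "?closed = (a ^ 2 - (real_of_int k - 4)^2) / (8 * (real_of_int k - 2))" .
  then show ?thesis
    unfolding S_def a_def by (simp add: add.assoc)
qed

lemma pell_lt_unit_mult:
  fixes k a b :: int
  assumes k: "k \<ge> 3" and a: "a > 0" and b: "b > 1" "odd b"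
    and pell: "a^2 - k*(k-2)*b^2 = 2*k"
  shows "a < (k-1)*b"
proof (rule ccontr)
  define c where "c = (k-1)*b"
  assume "\<not> a < (k-1)*b"
  then have ca: "c \<le> a" unfolding c_def by simp
  have c_sq: "c^2 = k*(k-2)*b^2 + b^2"
    unfolding c_def by (simp add: power2_eq_square algebra_simps)
  have "(k-1)*2 \<le> (k-1)*b" using b k by (intro mult_left_mono) auto
  then have c_ge: "2*k - 2 \<le> c" unfolding c_def by simp
  then have "2*k < 2*c + 1" using k by linarith
  moreover have "a^2 = c^2 + 2*k - b^2" using pell c_sq by linarith
  moreover have "(c+1)^2 = c^2 + 2*c + 1" by (simp add: power2_eq_square algebra_simps)
  moreover have "0 \<le> b^2" by simp
  ultimately have "a^2 < (c+1)^2" by linarith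
  then have "a < c + 1" by (rule power_less_imp_less_base) (use c_ge k in linarith)
  with ca have "a = c" by simp
  then have "b^2 = 2*k" using pell c_sq by simp
  then show False using b by (metis dvd_triv_left even_power zero_less_numeral)
qed

text \<open>Multiplying \<open>a + b\<surd>(k(k-2))\<close> by the conjugate unit \<open>k - 1 - \<surd>(k(k-2))\<close>
  gives a smaller solution of the same kind.\<close>

lemma pell_descent:
  fixes k a b :: int
  assumes k: "k \<ge> 3" and a: "a > 0" and b: "b > 1" "odd b"
    and pell: "a^2 - k*(k-2)*b^2 = 2*k"
  shows "\<exists>a' b'. 0 < a' \<and> 0 < b' \<and> b' < b \<and> odd b' \<and> a'^2 - k*(k-2)*b'^2 = 2*k
    \<and> (k-1)*a' + k*(k-2)*b' = a \<and> a' + (k-1)*b' = b"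
proof -
  define D where "D = k*(k-2)"
  define a' where "a' = (k-1)*a - D*b"
  define b' where "b' = (k-1)*b - a"
  have D1: "(k-1)^2 = D + 1" unfolding D_def by (simp add: power2_eq_square algebra_simps)
  have pellD: "a^2 = D*b^2 + 2*k" using pell unfolding D_def by simp
  have "0 < b'" using pell_lt_unit_mult[OF assms] unfolding b'_def by simp
  moreover have "b' < b"
  proof (rule ccontr)
    assume "\<not> b' < b"
    then have "a \<le> (k-2)*b" unfolding b'_def by (simp add: algebra_simps)
    then have "a^2 \<le> ((k-2)*b)^2" using a by (intro power_mono) auto
    moreover have "((k-2)*b)^2 + 2*(k-2)*b^2 = D*b^2"
      unfolding D_def by (simp add: power2_eq_square algebra_simps)
    moreover have "2*(k-2)*b^2 > 0" using k b by simp
    ultimately show False using pellD k by linarith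
  qed
  moreover have "0 < a'"
  proof (rule ccontr)
    assume "\<not> 0 < a'"
    then have "((k-1)*a)^2 \<le> (D*b)^2"
      using a k unfolding a'_def D_def by (intro power_mono) auto
    moreover have "((k-1)*a)^2 = (D*b)^2 + D*b^2 + 2*k*(D+1)"
      using D1 pellD by (simp add: power_mult_distrib power2_eq_square algebra_simps)
    moreover have "D*b^2 > 0" "2*k*(D+1) > 0" using k b unfolding D_def by simp_all
    ultimately show False by linarith
  qed
  moreover have "even (a^2) = even (D*b^2)" using pellD by simp
  then have "odd b'"
    using b unfolding b'_def D_def by (cases "even k") auto
  moreover have "a'^2 - k*(k-2)*b'^2 = 2*k" "(k-1)*a' + k*(k-2)*b' = a" "a' + (k-1)*b' = b"
    using pell unfolding a'_def b'_def D_def by (simp_all add: power2_eq_square algebra_simps)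
  ultimately show ?thesis by blast
qed

lemma pell_orbit_complete:
  fixes k a b :: int
  assumes k: "k \<ge> 3"
  shows "0 < a \<Longrightarrow> 0 < b \<Longrightarrow> odd b \<Longrightarrow> a^2 - k*(k-2)*b^2 = 2*k
    \<Longrightarrow> \<exists>i. pell_orbit k i = (a, b)"
proof (induction "nat b" arbitrary: a b rule: less_induct)
  case less
  show ?case
  proof (cases "b = 1")
    case True
    then have "(a - k) * (a + k) = 0"
      using less.prems by (simp add: power2_eq_square algebra_simps)
    then have "a = k" using less.prems k by simp
    with True show ?thesis by (metis pell_orbit.simps(1))
  next
    case False
    then obtain a' b' where "0 < a'" "0 < b'" "b' < b" "odd b'" "a'^2 - k*(k-2)*b'^2 = 2*k"
      and step: "(k-1)*a' + k*(k-2)*b' = a" "a' + (k-1)*b' = b"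
      using pell_descent[OF k, of a b] less.prems by auto
    then obtain i where "pell_orbit k i = (a', b')"
      using less.hyps[of b' a'] by auto
    then have "pell_orbit k (Suc i) = (a, b)" using step by simp
    then show ?thesis by blast
  qed
qed

lemma polygonal_eq_centered_polygonal_in_pell_orbit:
  assumes k: "k \<ge> 3" and "n \<ge> 1" "m \<ge> 0"
    and eq: "polygonal n k = centered_polygonal m k"
  shows "\<exists>i. fst (pell_orbit k i) = 2*(k-2)*n + 4 - k"
proof -
  have "(2*(k-2)*n + 4 - k)^2 - k*(k-2)*\<bar>2*m - 1\<bar>^2 = 2*k"
    using eq polygonal_eq_centered_polygonal_iff[of k n m] k by simp
  moreover have "(k-2)*n \<ge> k-2" using assms by (simp add: mult_left_mono[where a=1, simplified])
  then have "2*(k-2)*n + 4 - k > 0" using k by linarith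
  moreover have "odd \<bar>2*m - 1\<bar>" "\<bar>2*m - 1\<bar> > 0" by presburger+
  ultimately obtain i where "pell_orbit k i = (2*(k-2)*n + 4 - k, \<bar>2*m - 1\<bar>)"
    using pell_orbit_complete[OF k] by blast
  then show ?thesis by (metis fst_conv)
qed

lemma pell_orbit_polygonal_eq_centered_polygonal:
  assumes k: "k \<ge> 3"
  shows "\<exists>n m. n \<ge> 1 \<and> m \<ge> 1 \<and> polygonal n k = centered_polygonal m k
    \<and> fst (pell_orbit k i) = 2*(k-2)*n + 4 - k"
proof -
  obtain n m where "n \<ge> 1" "m \<ge> 1" and nm: "pell_orbit k i = (2*(k-2)*n + 4 - k, 2*m - 1)"
    using pell_orbit_shape[OF k] by blast
  moreover have "polygonal n k = centered_polygonal m k"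
    using pell_orbit_pell[of k i] polygonal_eq_centered_polygonal_iff[of k n m] k nm by simp
  ultimately show ?thesis by auto
qed

lemma polygonal_and_centered_polygonal_iff_pell_orbit:
  fixes x :: real
  assumes k: "k \<ge> 3"
  shows "(\<exists>N. x = real_of_int N \<and> (\<exists>n\<ge>1. real_of_int N = polygonal n k)
                \<and> (\<exists>m\<ge>0. real_of_int N = centered_polygonal m k))
    \<longleftrightarrow> (\<exists>i. x = (real_of_int (fst (pell_orbit k i)) ^ 2 - (real_of_int k - 4)^2)
                    / (8 * (real_of_int k - 2)))"
proof -
  have k2: "k \<noteq> 2" using k by simp
  show ?thesis
  proof
    assume "\<exists>N. x = real_of_int N \<and> (\<exists>n\<ge>1. real_of_int N = polygonal n k)
                \<and> (\<exists>m\<ge>0. real_of_int N = centered_polygonal m k)"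
    then obtain n m where "n \<ge> 1" "m \<ge> 0" and x: "x = polygonal n k"
      and "x = centered_polygonal m k"
      by blast
    then obtain i where "fst (pell_orbit k i) = 2*(k-2)*n + 4 - k"
      using polygonal_eq_centered_polygonal_in_pell_orbit[OF k] by metis
    then have "x = (real_of_int (fst (pell_orbit k i)) ^ 2 - (real_of_int k - 4)^2)
                    / (8 * (real_of_int k - 2))"
      using x polygonal_eq_square[OF k2, of n] by simp
    then show "\<exists>i. x = (real_of_int (fst (pell_orbit k i)) ^ 2 - (real_of_int k - 4)^2)
                    / (8 * (real_of_int k - 2))"
      by blast
  next
    assume "\<exists>i. x = (real_of_int (fst (pell_orbit k i)) ^ 2 - (real_of_int k - 4)^2)
                    / (8 * (real_of_int k - 2))"
    then obtain i where x: "x = (real_of_int (fst (pell_orbit k i)) ^ 2 - (real_of_int k - 4)^2)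
                    / (8 * (real_of_int k - 2))"
      by blast
    obtain n m where n: "n \<ge> 1" and m: "m \<ge> 1" and eq: "polygonal n k = centered_polygonal m k"
      and a: "fst (pell_orbit k i) = 2*(k-2)*n + 4 - k"
      using pell_orbit_polygonal_eq_centered_polygonal[OF k] by blast
    obtain N where N: "polygonal n k = real_of_int N"
      using polygonal_in_Ints by (metis Ints_cases)
    have "x = real_of_int N"
      using x a N polygonal_eq_square[OF k2, of n] by simp
    then show "\<exists>N. x = real_of_int N \<and> (\<exists>n\<ge>1. real_of_int N = polygonal n k)
                \<and> (\<exists>m\<ge>0. real_of_int N = centered_polygonal m k)"
      using n m eq N by (metis order_trans zero_le_one)
  qed
qed

theorem mainTheorem1:
  fixes k :: int
  assumes "k \<ge> 3"
  shows "real_of_int ` {N :: int. (\<exists>n::int. n \<ge> 1 \<and> real_of_int N = polygonal n k)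
                 \<and> (\<exists>m::int. m \<ge> 0 \<and> real_of_int N = centered_polygonal m k)}
         = {x :: real. \<exists>i::nat. x =
              real_of_int k / (16 * real_of_int (k - 2)) *
              ((- 2 * (real_of_int k)^2 + 18 * real_of_int k - 32) / real_of_int k
               + (real_of_int k - 1 + sqrt (real_of_int (k * (k - 2)))) ^ (2 * i + 1)
               + (real_of_int k - 1 - sqrt (real_of_int (k * (k - 2)))) ^ (2 * i + 1))}"
  unfolding pell_orbit_closed_form[OF assms]
  using polygonal_and_centered_polygonal_iff_pell_orbit[OF assms] by blast

end
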